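(* Let $r>0$, $d>0$ with $d\sqrt{2}<r$, and let $X\subseteq\mathbb{R}^2$ be a bounded $r$-regular set whose boundary contains no point of $d\mathbb{Z}^2$. Let $Q$ be the $2d\times 2d$ square formed by a $2\times 2$ block of pixels of the lattice $d\mathbb{Z}^2$, all four of which are grey. Then $\partial X$ does not intersect all four edges (sides of length $2d$) of $Q$.
   Context: A closed set $X\subseteq\mathbb{R}^2$ is $r$-regular if for each $x\in\partial X$ there are two open balls of radius $r$, $B_r(x_b)\subseteq X$ and $B_r(x_w)\subseteq \mathbb{R}^2\setminus X$, with $\overline{B_r(x_b)}\cap\overline{B_r(x_w)}=\{x\}$. Pixels are the closed squares $[dk,d(k+1)]\times[dl,d(l+1)]$, $k,l\in\mathbb{Z}$. A pixel $P$ is black if $\mathrm{area}(X\cap P)=d^2$, white if $\mathrm{area}(X\cap P)=0$, and grey otherwise. *)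

theory Defs
  imports "HOL-Analysis.Analysis"
begin

text \<open>Points of the plane are pairs of reals; the product metric is Euclidean.\<close>

definition r_regular :: "real \<Rightarrow> (real \<times> real) set \<Rightarrow> bool" where
  "r_regular r X \<longleftrightarrow> closed X \<and>
     (\<forall>x\<in>frontier X. \<exists>xb xw. ball xb r \<subseteq> X \<and> ball xw r \<subseteq> - X \<and>
                              cball xb r \<inter> cball xw r = {x})"

definition pixel :: "real \<Rightarrow> int \<Rightarrow> int \<Rightarrow> (real \<times> real) set" where
  "pixel d k l = {d * of_int k .. d * of_int (k + 1)} \<times> {d * of_int l .. d * of_int (l + 1)}"

definition area :: "(real \<times> real) set \<Rightarrow> real" where
  "area S = measure lborel S"

definition grey_pixel :: "real \<Rightarrow> (real \<times> real) set \<Rightarrow> int \<Rightarrow> int \<Rightarrow> bool" where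
  "grey_pixel d X k l \<longleftrightarrow> area (X \<inter> pixel d k l) \<noteq> d\<^sup>2 \<and> area (X \<inter> pixel d k l) \<noteq> 0"

definition square_edges :: "real \<Rightarrow> real \<Rightarrow> real \<Rightarrow> (real \<times> real) set set" where
  "square_edges a b s =
     { {a..a+s} \<times> {b}, {a..a+s} \<times> {b+s}, {a} \<times> {b..b+s}, {a+s} \<times> {b..b+s} }"

end

theory Submission
  imports Defs
begin

text \<open>
  The centre c of the block is a lattice point, so it is not on the boundary of X. Let z be a
  boundary point nearest to c, at distance \<delta>, and v = (c - z) / \<delta>. The open ball of radius \<delta>
  around c lies on one side of the boundary, so the two r-balls tangent to the boundary at z are
  centred on the line through c and z, and neither contains a boundary point.

  Suppose the boundary met all four sides of the square. Up to a symmetry of the square, v lies in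
  the first octant. Take boundary points R and L on the sides ahead of and behind c along the first
  axis, and a boundary point f in the grey pixel of the quadrant containing v. Since R, L and f
  avoid the tangent balls at z and r > d sqrt 2, elementary estimates confine v, \<delta>, f and L to
  narrow ranges, and there L and z cannot both avoid the two r-balls tangent to the boundary at f.
\<close>

section \<open>Tangent balls of r-regular sets\<close>

lemma dist_ge_if_ball_on_one_side:
  assumes "ball p r \<subseteq> X \<or> ball p r \<subseteq> - X" and "y \<in> frontier X"
  shows "r \<le> dist p y"
proof -
  obtain Y where "ball p r \<subseteq> Y" and "frontier Y = frontier X"
    using assms(1) frontier_complement by blast
  then have "ball p r \<subseteq> interior Y"
    by (simp add: interior_maximal)
  then show ?thesis
    using assms(2) \<open>frontier Y = frontier X\<close> by (force simp: frontier_def)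
qed

lemma dist_ge_if_disjoint_balls:
  fixes a b :: "'a::real_normed_vector"
  assumes "ball a r \<inter> ball b s = {}" and "r > 0" and "s > 0"
  shows "r + s \<le> dist a b"
proof (rule ccontr)
  assume close: "\<not> r + s \<le> dist a b"
  define t where "t = r / (r + s)"
  define p where "p = a + t *\<^sub>R (b - a)"
  have t: "0 < t" "t < 1" "t * (r + s) = r" "(1 - t) * (r + s) = s"
    using assms by (auto simp: t_def field_simps)
  have "b - p = (1 - t) *\<^sub>R (b - a)"
    by (simp add: p_def algebra_simps)
  then have "dist a p = t * dist a b" "dist b p = (1 - t) * dist a b"
    using t by (simp_all add: p_def dist_norm norm_minus_commute)
  moreover have "t * dist a b < r" "(1 - t) * dist a b < s"
    using close t by (metis mult_strict_left_mono not_le diff_gt_0_iff_gt)+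
  ultimately have "p \<in> ball a r \<inter> ball b s"
    by simp
  then show False
    using assms(1) by blast
qed

lemma cball_Int_cball_singleton:
  fixes a b x :: "'a::euclidean_space"
  assumes touch: "cball a r \<inter> cball b r = {x}"
  shows "x = midpoint a b" and "dist a x = r"
proof -
  have ax: "dist a x \<le> r" and bx: "dist b x \<le> r"
    using touch by auto
  have "dist a b \<le> dist a x + dist b x"
    by (rule dist_triangle2)
  then have "midpoint a b \<in> cball a r \<inter> cball b r"
    using ax bx by (simp add: dist_midpoint)
  then show mid: "x = midpoint a b"
    using touch by (metis singletonD)
  show "dist a x = r"
  proof (rule ccontr)
    assume "dist a x \<noteq> r"
    then have e: "r - dist a x > 0"
      using ax by simp
    obtain u :: 'a where u: "norm u = 1"
      using vector_choose_size zero_le_one by blast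
    define y where "y = x + (r - dist a x) *\<^sub>R u"
    have "dist a y \<le> dist a x + dist x y" "dist b y \<le> dist b x + dist x y"
      by (rule dist_triangle)+
    moreover have "dist x y = r - dist a x"
      using u e by (simp add: y_def dist_norm)
    moreover have "dist b x = dist a x"
      using mid by (simp add: dist_midpoint)
    ultimately have "y \<in> cball a r \<inter> cball b r"
      by simp
    then have "y = x"
      using touch by blast
    then show False
      using u e by (simp add: y_def)
  qed
qed

lemma r_regular_tangent_balls:
  assumes "r_regular r X" and "r > 0" and "x \<in> frontier X"
  obtains n where "norm n = 1" and "ball (x + r *\<^sub>R n) r \<subseteq> X" and "ball (x - r *\<^sub>R n) r \<subseteq> - X"
proof -
  obtain xb xw where b: "ball xb r \<subseteq> X" and w: "ball xw r \<subseteq> - X"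
    and touch: "cball xb r \<inter> cball xw r = {x}"
    using assms(1,3) unfolding r_regular_def by blast
  define n where "n = (1 / r) *\<^sub>R (xb - x)"
  have "norm n = 1"
    using cball_Int_cball_singleton(2)[OF touch] assms(2) by (simp add: n_def dist_norm)
  moreover have "xb = x + r *\<^sub>R n" "xw = x - r *\<^sub>R n"
    using cball_Int_cball_singleton(1)[OF touch, symmetric] assms(2)
    by (auto simp: n_def midpoint_eq_iff algebra_simps)
  ultimately show ?thesis
    using that b w by simp
qed

definition normal_at :: "real \<Rightarrow> 'a::real_normed_vector set \<Rightarrow> 'a \<Rightarrow> 'a \<Rightarrow> bool" where
  "normal_at r X x n \<longleftrightarrow> norm n = 1 \<and>
     (\<forall>y\<in>frontier X. r \<le> dist (x + r *\<^sub>R n) y \<and> r \<le> dist (x - r *\<^sub>R n) y)"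

lemma normal_at_uminus [simp]: "normal_at r X x (- n) \<longleftrightarrow> normal_at r X x n"
  by (auto simp: normal_at_def)

lemma normal_at_if_tangent_balls:
  assumes "norm n = 1" and "ball (x + r *\<^sub>R n) r \<subseteq> X" and "ball (x - r *\<^sub>R n) r \<subseteq> - X"
  shows "normal_at r X x n"
  unfolding normal_at_def using assms by (meson dist_ge_if_ball_on_one_side)

lemma r_regular_normal_at:
  assumes "r_regular r X" and "r > 0" and "x \<in> frontier X"
  obtains n where "normal_at r X x n"
  using r_regular_tangent_balls[OF assms] normal_at_if_tangent_balls by metis

lemma tangent_ball_direction:
  fixes c z n :: "'a::real_inner"
  assumes "norm n = 1" and "dist c z = \<delta>" and "\<delta> > 0" and "r > 0"
    and far: "r + \<delta> \<le> dist (z - r *\<^sub>R n) c"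
  shows "n = (1 / \<delta>) *\<^sub>R (c - z)"
proof -
  have "dist (z - r *\<^sub>R n) c = norm (r *\<^sub>R n + (c - z))"
    by (simp add: dist_norm norm_minus_commute algebra_simps)
  moreover have "norm (r *\<^sub>R n) + norm (c - z) = r + \<delta>"
    using assms(1-4) by (simp add: dist_norm)
  moreover have "norm (r *\<^sub>R n + (c - z)) \<le> norm (r *\<^sub>R n) + norm (c - z)"
    by (rule norm_triangle_ineq)
  ultimately have "norm (r *\<^sub>R n + (c - z)) = norm (r *\<^sub>R n) + norm (c - z)"
    using far by linarith
  then have "norm (r *\<^sub>R n) *\<^sub>R (c - z) = norm (c - z) *\<^sub>R (r *\<^sub>R n)"
    by (rule norm_triangle_eq[THEN iffD1])
  then have scaled: "(\<delta> * r) *\<^sub>R n = r *\<^sub>R (c - z)"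
    using assms(1-4) by (simp add: dist_norm norm_minus_commute)
  have "n = (1 / (\<delta> * r)) *\<^sub>R ((\<delta> * r) *\<^sub>R n)"
    using assms(3,4) by simp
  also have "\<dots> = (1 / \<delta>) *\<^sub>R (c - z)"
    unfolding scaled using assms(4) by simp
  finally show ?thesis .
qed

lemma normal_at_towards_clear_ball:
  fixes c z n :: "'a::real_inner"
  assumes n: "norm n = 1" and inside: "ball (z + r *\<^sub>R n) r \<subseteq> X" and outside: "ball (z - r *\<^sub>R n) r \<subseteq> - X"
    and clear: "ball c \<delta> \<subseteq> X \<or> ball c \<delta> \<subseteq> - X" and dz: "dist c z = \<delta>" and "0 < \<delta>" and "0 < r"
  shows "normal_at r X z ((1 / \<delta>) *\<^sub>R (c - z))"
proof -
  have "ball (z - r *\<^sub>R n) r \<inter> ball c \<delta> = {} \<or> ball (z - r *\<^sub>R (- n)) r \<inter> ball c \<delta> = {}"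
    using clear inside outside by auto
  then have "r + \<delta> \<le> dist (z - r *\<^sub>R n) c \<or> r + \<delta> \<le> dist (z - r *\<^sub>R (- n)) c"
    using dist_ge_if_disjoint_balls assms(6,7) by blast
  then have "n = (1 / \<delta>) *\<^sub>R (c - z) \<or> - n = (1 / \<delta>) *\<^sub>R (c - z)"
    using tangent_ball_direction[OF n dz assms(6,7)] tangent_ball_direction[of "- n", OF _ dz assms(6,7)] n
    by auto
  moreover have "normal_at r X z n"
    using n inside outside by (rule normal_at_if_tangent_balls)
  ultimately show ?thesis
    by (metis normal_at_uminus)
qed

lemma nearest_frontier_point_normal:
  assumes reg: "r_regular r X" and "r > 0" and "c \<notin> frontier X" and "frontier X \<noteq> {}"
  obtains z \<delta> v where "z \<in> frontier X" and "\<delta> > 0" and "\<forall>y\<in>frontier X. \<delta> \<le> dist c y"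
    and "z = c - \<delta> *\<^sub>R v" and "normal_at r X z v"
proof -
  obtain z where z: "z \<in> frontier X" and nearest: "\<And>y. y \<in> frontier X \<Longrightarrow> dist c z \<le> dist c y"
    using distance_attains_inf[OF frontier_closed assms(4), where a = c] by blast
  define \<delta> where "\<delta> = dist c z"
  have \<delta>: "\<delta> > 0"
    using z assms(3) by (auto simp: \<delta>_def)
  have "ball c \<delta> \<inter> frontier X = {}"
    using nearest unfolding \<delta>_def by (meson disjoint_iff mem_ball not_le)
  then have "ball c \<delta> \<subseteq> X \<or> ball c \<delta> \<subseteq> - X"
    using connected_Int_frontier[OF connected_ball] by blast
  then have "normal_at r X z ((1 / \<delta>) *\<^sub>R (c - z))"
    using r_regular_tangent_balls[OF reg assms(2) z] normal_at_towards_clear_ball \<delta> assms(2)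
    unfolding \<delta>_def by metis
  moreover have "z = c - \<delta> *\<^sub>R ((1 / \<delta>) *\<^sub>R (c - z))"
    using \<delta> by simp
  moreover have "\<forall>y\<in>frontier X. \<delta> \<le> dist c y"
    using nearest by (simp add: \<delta>_def)
  ultimately show ?thesis
    using that z \<delta> by blast
qed

lemma outside_ball_power:
  fixes c v y :: "'a::real_inner"
  assumes "norm v = 1" and "0 \<le> r" and "r \<le> dist (c + \<rho> *\<^sub>R v) y"
  shows "r\<^sup>2 - \<rho>\<^sup>2 \<le> (norm (y - c))\<^sup>2 - 2 * \<rho> * ((y - c) \<bullet> v)"
proof -
  define w where "w = y - c"
  have "v \<bullet> v = 1"
    using assms(1) by (simp add: power2_norm_eq_inner [symmetric])
  have "r\<^sup>2 \<le> (dist (c + \<rho> *\<^sub>R v) y)\<^sup>2"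
    using assms(2,3) by (simp add: power_mono)
  also have "\<dots> = (w - \<rho> *\<^sub>R v) \<bullet> (w - \<rho> *\<^sub>R v)"
    by (simp add: w_def dist_norm power2_norm_eq_inner norm_minus_commute algebra_simps)
  also have "\<dots> = w \<bullet> w - 2 * \<rho> * (w \<bullet> v) + \<rho>\<^sup>2"
    using \<open>v \<bullet> v = 1\<close> by (simp add: inner_diff_left inner_diff_right inner_commute power2_eq_square algebra_simps)
  finally show ?thesis
    by (simp add: w_def power2_norm_eq_inner)
qed

lemma normal_at_inner_bound:
  fixes x n y :: "'a::real_inner"
  assumes "normal_at r X x n" and "y \<in> frontier X" and "0 \<le> r"
  shows "2 * r * \<bar>(y - x) \<bullet> n\<bar> \<le> (norm (y - x))\<^sup>2"
proof -
  have "norm n = 1" "r \<le> dist (x + r *\<^sub>R n) y" "r \<le> dist (x + (- r) *\<^sub>R n) y"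
    using assms(1,2) by (auto simp: normal_at_def)
  from outside_ball_power[OF this(1) assms(3) this(2)] outside_ball_power[OF this(1) assms(3) this(3)]
  show ?thesis
    by (simp add: abs_le_iff)
qed

section \<open>The configuration in normalized coordinates\<close>

text \<open>
  Coordinates are centred at c, scaled so that the half-side of the square is 1, and taken in a
  frame in which the normal v = (C, S) at the nearest boundary point z = - \<delta> v satisfies
  0 \<le> S \<le> C. The boundary points are R = (1, y), L = (-1, l) and f = (a, b) with (a, b) in the pixel
  [0,1] \<times> [0,1], and (n1, n2) is a normal at f. With \<rho> = r - \<delta> and \<kappa> = r^2 - \<rho>^2, a point p avoids
  the tangent ball at z containing c iff \<kappa> \<le> |p|^2 - 2 \<rho> (p \<bullet> v); this is evaluated at the corners
  (1,0), (0,1) and (1,-1).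
\<close>

lemma first_octant_unit_vector:
  fixes C S :: real
  assumes CS: "C\<^sup>2 + S\<^sup>2 = 1" "0 \<le> S" "S \<le> C"
  shows "C \<le> 1" and "1 \<le> 2 * C" and "1 \<le> C + S"
proof -
  have C0: "0 \<le> C"
    using CS by simp
  have "C\<^sup>2 \<le> 1"
    using CS(1) zero_le_power2[of S] by linarith
  then show C1: "C \<le> 1"
    by (simp add: abs_square_le_1)
  have "S\<^sup>2 \<le> C\<^sup>2"
    using CS by (simp add: power_mono)
  moreover have "C\<^sup>2 \<le> C"
    using C0 C1 power_Suc_le_self[of C 1] by (simp add: power2_eq_square)
  ultimately show "1 \<le> 2 * C"
    using CS by linarith
  have "(C + S)\<^sup>2 = 1 + 2 * (C * S)"
    using CS(1) by (simp add: power2_eq_square algebra_simps)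
  then have "1 \<le> (C + S)\<^sup>2"
    using C0 CS(2) by simp
  then show "1 \<le> C + S"
    using power2_le_imp_le[of 1 "C + S"] C0 CS(2) by simp
qed

lemma outside_ball_pixel_corners:
  fixes a b C S \<rho> \<kappa> r :: real
  assumes a: "0 \<le> a" "a \<le> 1" and b: "0 \<le> b" "b \<le> 1"
    and CS: "C\<^sup>2 + S\<^sup>2 = 1" "0 \<le> S" "S \<le> C" and \<rho>: "0 \<le> \<rho>"
    and \<kappa>: "\<kappa> = r\<^sup>2 - \<rho>\<^sup>2" "0 < \<kappa>" and r: "2 < r\<^sup>2"
    and outside: "\<kappa> \<le> a\<^sup>2 + b\<^sup>2 - 2 * \<rho> * (a * C + b * S)"
  shows "1 \<le> 2 * \<rho> * C" and "\<kappa> \<le> 1 - 2 * \<rho> * S"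
proof -
  have "a\<^sup>2 \<le> a" "b\<^sup>2 \<le> b"
    using a b power_Suc_le_self[of _ 1] by (simp_all add: power2_eq_square)
  then have linear: "\<kappa> \<le> a * (1 - 2 * \<rho> * C) + b * (1 - 2 * \<rho> * S)"
    using outside by (simp add: algebra_simps)
  show first: "1 \<le> 2 * \<rho> * C"
  proof (rule ccontr)
    assume small: "\<not> 1 \<le> 2 * \<rho> * C"
    have "\<rho> \<le> \<rho> * (2 * C)"
      using first_octant_unit_vector(2)[OF CS] \<rho> by (simp add: mult_le_cancel_left1)
    then have "\<rho>\<^sup>2 \<le> \<rho>"
      using small \<rho> power_Suc_le_self[of \<rho> 1] by (simp add: power2_eq_square)
    have "\<rho> * S \<le> \<rho> * C"
      using CS \<rho> by (simp add: mult_left_mono)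
    then have "a * (1 - 2 * \<rho> * C) \<le> 1 - 2 * \<rho> * C" "b * (1 - 2 * \<rho> * S) \<le> 1 - 2 * \<rho> * S"
      using a b small by (simp_all add: mult_left_le_one_le)
    moreover have "\<rho> \<le> \<rho> * (C + S)"
      using first_octant_unit_vector(3)[OF CS] \<rho> by (simp add: mult_le_cancel_left1)
    ultimately show False
      using linear \<kappa> r \<rho> \<open>\<rho>\<^sup>2 \<le> \<rho>\<close> by (simp add: algebra_simps)
  qed
  have "a * (1 - 2 * \<rho> * C) \<le> 0"
    using a first by (simp add: mult_nonneg_nonpos)
  then have b_part: "\<kappa> \<le> b * (1 - 2 * \<rho> * S)"
    using linear by linarith
  then have "0 < 1 - 2 * \<rho> * S"
    using b \<kappa> by (smt (verit) mult_nonneg_nonpos)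
  then show "\<kappa> \<le> 1 - 2 * \<rho> * S"
    using b_part b by (smt (verit) mult_left_le_one_le)
qed

lemma outside_ball_edge_corner:
  fixes y C S \<rho> \<kappa> :: real
  assumes y: "-1 \<le> y" "y \<le> 1" and "0 \<le> \<rho>" and "0 \<le> S"
    and outside: "\<kappa> \<le> 1 + y\<^sup>2 - 2 * \<rho> * (C + y * S)"
  shows "\<kappa> \<le> 2 - 2 * \<rho> * (C - S)"
proof -
  have "y\<^sup>2 \<le> 1"
    using y by (simp add: abs_square_le_1)
  moreover have "0 \<le> \<rho> * S * (1 + y)"
    using assms by simp
  ultimately show ?thesis
    using outside by (simp add: algebra_simps)
qed

lemma power_bound:
  fixes C S \<rho> \<kappa> r :: real
  assumes CS: "C\<^sup>2 + S\<^sup>2 = 1" "0 \<le> S" and \<rho>: "0 \<le> \<rho>"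
    and \<kappa>: "\<kappa> = r\<^sup>2 - \<rho>\<^sup>2" and r: "2 < r\<^sup>2"
    and corner10: "1 \<le> 2 * \<rho> * C" and corner01: "\<kappa> \<le> 1 - 2 * \<rho> * S"
    and corner1m: "\<kappa> \<le> 2 - 2 * \<rho> * (C - S)"
  shows "\<kappa> \<le> 2255/10000"
proof -
  have S: "0 \<le> 2 * \<rho> * S" "2 * \<rho> * S \<le> 1 - \<kappa>"
    using CS \<rho> corner01 by simp_all
  then have C: "2 * \<rho> * C \<le> 3 - 2 * \<kappa>"
    using corner1m by (simp add: algebra_simps)
  have "(2 * \<rho> * S)\<^sup>2 \<le> (1 - \<kappa>)\<^sup>2"
    using S by (intro power_mono) auto
  moreover have "(2 * \<rho> * C)\<^sup>2 \<le> (3 - 2 * \<kappa>)\<^sup>2"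
    using C corner10 by (intro power_mono) linarith+
  ultimately have "4 * \<rho>\<^sup>2 * (C\<^sup>2 + S\<^sup>2) \<le> (1 - \<kappa>)\<^sup>2 + (3 - 2 * \<kappa>)\<^sup>2"
    by (simp add: power_mult_distrib algebra_simps)
  then have "4 * (r\<^sup>2 - \<kappa>) \<le> (1 - \<kappa>)\<^sup>2 + (3 - 2 * \<kappa>)\<^sup>2"
    using CS \<kappa> by simp
  then have quadratic: "0 < 5 * \<kappa>\<^sup>2 - 10 * \<kappa> + 2"
    using r by (simp add: power2_eq_square algebra_simps)
  have "\<kappa> \<le> 1"
    using S by linarith
  show ?thesis
  proof (rule ccontr)
    assume "\<not> \<kappa> \<le> 2255/10000"
    then have "(\<kappa> - 2255/10000) * (\<kappa> - 1) \<le> 0"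
      using \<open>\<kappa> \<le> 1\<close> by (intro mult_nonneg_nonpos) auto
    moreover have "(\<kappa> - 2255/10000) * (\<kappa> - 1) = \<kappa>\<^sup>2 - (12255/10000) * \<kappa> + 2255/10000"
      by (simp add: power2_eq_square field_simps)
    ultimately show False
      using quadratic \<open>\<not> \<kappa> \<le> 2255/10000\<close> by linarith
  qed
qed

lemma outside_ball_corner01_bound:
  fixes S \<rho> \<kappa> r :: real
  assumes "0 \<le> S" and \<rho>: "0 \<le> \<rho>" and \<kappa>: "\<kappa> = r\<^sup>2 - \<rho>\<^sup>2" "0 < \<kappa>" "\<kappa> \<le> 1" and r: "2 < r\<^sup>2"
    and corner01: "\<kappa> \<le> 1 - 2 * \<rho> * S"
  shows "8 * S\<^sup>2 \<le> 1"
proof -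
  have "(2 * \<rho> * S)\<^sup>2 \<le> (1 - \<kappa>)\<^sup>2"
    using corner01 \<rho> assms(1) by (intro power_mono) auto
  moreover have "4 * (2 - \<kappa>) * S\<^sup>2 \<le> 4 * \<rho>\<^sup>2 * S\<^sup>2"
    using \<kappa> r by (intro mult_right_mono) auto
  moreover have "\<kappa> * (2 * \<kappa> - 3) \<le> 0"
    using \<kappa> by (intro mult_nonneg_nonpos) auto
  ultimately have "(2 - \<kappa>) * (8 * S\<^sup>2) \<le> (2 - \<kappa>) * 1"
    by (simp add: power_mult_distrib power2_eq_square algebra_simps)
  then show ?thesis
    using \<kappa> by (simp add: mult_le_cancel_left)
qed

lemma outside_ball_corner1m_bound:
  fixes C S \<rho> \<kappa> r :: real
  assumes CS: "C\<^sup>2 + S\<^sup>2 = 1" "S \<le> C" and \<rho>: "0 \<le> \<rho>"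
    and \<kappa>: "\<kappa> = r\<^sup>2 - \<rho>\<^sup>2" "0 < \<kappa>" "\<kappa> \<le> 1" and r: "2 < r\<^sup>2"
    and corner1m: "\<kappa> \<le> 2 - 2 * \<rho> * (C - S)"
  shows "1 < 4 * (C * S)"
proof -
  have "(2 * \<rho> * (C - S))\<^sup>2 \<le> (2 - \<kappa>)\<^sup>2"
    using corner1m \<rho> CS by (intro power_mono) auto
  moreover have "4 * (2 - \<kappa>) * (C - S)\<^sup>2 \<le> 4 * \<rho>\<^sup>2 * (C - S)\<^sup>2"
    using \<kappa> r by (intro mult_right_mono) auto
  ultimately have "(2 - \<kappa>) * (4 * (C - S)\<^sup>2) \<le> (2 - \<kappa>) * (2 - \<kappa>)"
    by (simp add: power_mult_distrib power2_eq_square algebra_simps)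
  then have "4 * (C - S)\<^sup>2 < 2"
    using \<kappa> by (simp add: mult_le_cancel_left)
  then show ?thesis
    using CS by (simp add: power2_eq_square algebra_simps)
qed

lemma direction_bounds:
  fixes C S :: real
  assumes CS: "C\<^sup>2 + S\<^sup>2 = 1" "0 \<le> S" "S \<le> C" and S2: "8 * S\<^sup>2 \<le> 1" and CS4: "1 < 4 * (C * S)"
  shows "2588/10000 \<le> S" and "S \<le> 3536/10000" and "9354/10000 \<le> C"
proof -
  show "S \<le> 3536/10000"
  proof (rule ccontr)
    assume "\<not> S \<le> 3536/10000"
    then have "(3536/10000)\<^sup>2 \<le> S\<^sup>2"
      by (intro power_mono) auto
    then show False
      using S2 by (simp add: power2_eq_square)
  qed
  have "1 < (4 * (C * S))\<^sup>2"
    using CS4 by (smt (verit) one_less_power pos2)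
  moreover have "C\<^sup>2 = 1 - S\<^sup>2"
    using CS(1) by simp
  ultimately have S_low: "1 < 16 * (S\<^sup>2 * (1 - S\<^sup>2))"
    by (simp add: power_mult_distrib mult_ac)
  show "2588/10000 \<le> S"
  proof (rule ccontr)
    assume "\<not> 2588/10000 \<le> S"
    then have "S\<^sup>2 \<le> (2588/10000)\<^sup>2"
      using CS by (intro power_mono) auto
    then have "0 \<le> ((2588/10000)\<^sup>2 - S\<^sup>2) * (1 - (2588/10000)\<^sup>2 - S\<^sup>2)"
      using S2 by (intro mult_nonneg_nonneg) (auto simp: power2_eq_square)
    moreover have "((2588/10000)\<^sup>2 - S\<^sup>2) * (1 - (2588/10000)\<^sup>2 - S\<^sup>2)
        = (2588/10000)\<^sup>2 * (1 - (2588/10000)\<^sup>2) - S\<^sup>2 * (1 - S\<^sup>2)"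
      by (simp add: algebra_simps)
    ultimately have "S\<^sup>2 * (1 - S\<^sup>2) \<le> (2588/10000)\<^sup>2 * (1 - (2588/10000)\<^sup>2)"
      by linarith
    then show False
      using S_low by (simp add: power2_eq_square)
  qed
  have "(9354/10000)\<^sup>2 \<le> C\<^sup>2"
    using CS S2 by (simp add: power2_eq_square)
  then show "9354/10000 \<le> C"
    by (rule power2_le_imp_le) (use CS in linarith)
qed

lemma radius_bounds:
  fixes \<rho> \<kappa> r \<delta> :: real
  assumes "0 < r" "0 < \<rho>" and r: "2 < r\<^sup>2" and \<kappa>: "\<kappa> = r\<^sup>2 - \<rho>\<^sup>2" "\<kappa> \<le> 2255/10000"
    and \<delta>: "\<rho> = r - \<delta>" "0 < \<delta>"
  shows "1332/1000 \<le> \<rho>" and "\<delta> \<le> 827/10000" and "14142/10000 \<le> r"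
proof -
  have "(1332/1000)\<^sup>2 \<le> \<rho>\<^sup>2"
    using \<kappa> r by (simp add: power2_eq_square)
  then show \<rho>: "1332/1000 \<le> \<rho>"
    by (rule power2_le_imp_le) (use assms(2) in linarith)
  have "(14142/10000)\<^sup>2 \<le> r\<^sup>2"
    using r by (simp add: power2_eq_square)
  then show r': "14142/10000 \<le> r"
    by (rule power2_le_imp_le) (use assms(1) in linarith)
  have "\<kappa> = \<delta> * (r + \<rho>)"
    unfolding \<kappa> \<delta> by (simp add: power2_eq_square algebra_simps)
  moreover have "\<delta> * (27462/10000) \<le> \<delta> * (r + \<rho>)"
    using \<rho> r' \<delta> by (intro mult_left_mono) auto
  ultimately show "\<delta> \<le> 827/10000"
    using \<kappa> by linarith
qed

lemma pixel_point_bounds: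
  fixes a b C S \<rho> \<kappa> :: real
  assumes a: "0 \<le> a" "a \<le> 1" and b: "0 \<le> b" "b \<le> 1"
    and "0 < \<kappa>" and \<rho>: "1332/1000 \<le> \<rho>" and S: "2588/10000 \<le> S" and C: "9354/10000 \<le> C"
    and outside: "\<kappa> \<le> a\<^sup>2 + b\<^sup>2 - 2 * \<rho> * (a * C + b * S)"
  shows "689/1000 \<le> b" and "a \<le> 135/1000"
proof -
  have "(1332/1000) * (9354/10000) \<le> \<rho> * C" "(1332/1000) * (2588/10000) \<le> \<rho> * S"
    using \<rho> S C by (intro mult_mono; simp)+
  then have \<rho>C: "24919/10000 \<le> 2 * \<rho> * C" and \<rho>S: "6894/10000 \<le> 2 * \<rho> * S"
    by simp_all
  have "a\<^sup>2 + b\<^sup>2 - 2 * \<rho> * (a * C + b * S) = b * (b - 2 * \<rho> * S) - a * (2 * \<rho> * C - a)"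
    by (simp add: power2_eq_square algebra_simps)
  then have ab: "a * (2 * \<rho> * C - a) < b * (b - 2 * \<rho> * S)"
    using outside \<open>0 < \<kappa>\<close> by linarith
  moreover have "0 \<le> a * (2 * \<rho> * C - a)"
    using a \<rho>C by simp
  ultimately have "0 < b - 2 * \<rho> * S"
    using b by (smt (verit) mult_nonneg_nonpos)
  then show "689/1000 \<le> b"
    using \<rho>S by linarith
  have "b * (b - 2 * \<rho> * S) \<le> b - 2 * \<rho> * S"
    using b \<open>0 < b - 2 * \<rho> * S\<close> by (simp add: mult_left_le_one_le)
  then have small: "a * (2 * \<rho> * C - a) < 3106/10000"
    using ab \<rho>S b by linarith
  show "a \<le> 135/1000"
  proof (rule ccontr)
    assume "\<not> a \<le> 135/1000"
    then have "0 \<le> (a - 135/1000) * (24919/10000 - a - 135/1000)"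
      using a by (intro mult_nonneg_nonneg) auto
    moreover have "(a - 135/1000) * (24919/10000 - a - 135/1000) = a * (24919/10000 - a) - 3181815/10000000"
      by (simp add: field_simps)
    moreover have "a * (24919/10000 - a) \<le> a * (2 * \<rho> * C - a)"
      using \<rho>C a by (intro mult_left_mono) auto
    ultimately show False
      using small by linarith
  qed
qed

lemma opposite_edge_point_bound:
  fixes l C S r \<delta> \<kappa> :: real
  assumes l: "-1 \<le> l" "l \<le> 1" and S: "0 \<le> S" "S \<le> 3536/10000" and C: "9354/10000 \<le> C"
    and r: "14142/10000 \<le> r" and \<delta>: "0 < \<delta>" "\<delta> \<le> 827/10000"
    and \<kappa>: "\<kappa> = 2 * r * \<delta> - \<delta>\<^sup>2" "\<kappa> \<le> 2255/10000"
    and outside: "r\<^sup>2 - (r + \<delta>)\<^sup>2 \<le> 1 + l\<^sup>2 + 2 * (r + \<delta>) * (l * S - C)"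
  shows "786/1000 \<le> l"
proof (rule ccontr)
  assume l_small: "\<not> 786/1000 \<le> l"
  have "\<delta>\<^sup>2 \<le> (827/10000)\<^sup>2"
    using \<delta> by (intro power_mono) auto
  then have "(r + \<delta>)\<^sup>2 - r\<^sup>2 \<le> 23918/100000"
    using \<kappa> by (simp add: power2_eq_square algebra_simps)
  then have main: "2 * (r + \<delta>) * (C - l * S) \<le> 1 + l\<^sup>2 + 23918/100000"
    using outside by (simp add: algebra_simps)
  show False
  proof (cases "0 \<le> l")
    case True
    have "l * S \<le> l * (3536/10000)"
      using True S by (intro mult_left_mono) auto
    then have "(14142/10000) * (9354/10000 - (3536/10000) * l) \<le> (r + \<delta>) * (C - l * S)"
      using r \<delta> C l_small by (intro mult_mono) auto
    moreover have "l * l \<le> (786/1000) * l"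
      using True l_small by (intro mult_right_mono) auto
    ultimately show False
      using main l_small True by (simp add: power2_eq_square algebra_simps)
  next
    case False
    then have "9354/10000 \<le> C - l * S"
      using S C by (smt (verit) mult_nonpos_nonneg)
    then have "(14142/10000) * (9354/10000) \<le> (r + \<delta>) * (C - l * S)"
      using r \<delta> by (intro mult_mono) auto
    moreover have "l\<^sup>2 \<le> 1"
      using l by (simp add: abs_square_le_1)
    ultimately show False
      using main by linarith
  qed
qed

text \<open>The hypotheses say that p and q avoid both r-balls tangent at the origin along \<plusminus>n.\<close>

lemma cross_bound_outside_tangent_balls:
  fixes p1 p2 q1 q2 n1 n2 r :: real
  assumes n: "n1\<^sup>2 + n2\<^sup>2 = 1" and r: "2 < r\<^sup>2" "0 < r"
    and p: "2 * r * \<bar>p1 * n1 + p2 * n2\<bar> \<le> p1\<^sup>2 + p2\<^sup>2"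
    and q: "2 * r * \<bar>q1 * n1 + q2 * n2\<bar> \<le> q1\<^sup>2 + q2\<^sup>2"
  shows "4 * (p1 * q2 - p2 * q1)\<^sup>2 \<le> (p1\<^sup>2 + p2\<^sup>2) * (q1\<^sup>2 + q2\<^sup>2) * (p1\<^sup>2 + p2\<^sup>2 + (q1\<^sup>2 + q2\<^sup>2))"
proof -
  define P Q where "P = p1\<^sup>2 + p2\<^sup>2" and "Q = q1\<^sup>2 + q2\<^sup>2"
  define \<alpha> \<gamma> where "\<alpha> = p1 * n1 + p2 * n2" and "\<gamma> = p2 * n1 - p1 * n2"
  define \<beta> \<epsilon> where "\<beta> = q1 * n1 + q2 * n2" and "\<epsilon> = q2 * n1 - q1 * n2"
  have "\<alpha>\<^sup>2 + \<gamma>\<^sup>2 = P * (n1\<^sup>2 + n2\<^sup>2)" "\<beta>\<^sup>2 + \<epsilon>\<^sup>2 = Q * (n1\<^sup>2 + n2\<^sup>2)"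
    "(p1 * q2 - p2 * q1) * (n1\<^sup>2 + n2\<^sup>2) = \<alpha> * \<epsilon> - \<gamma> * \<beta>"
    unfolding P_def Q_def \<alpha>_def \<gamma>_def \<beta>_def \<epsilon>_def by (simp_all add: power2_eq_square algebra_simps)
  then have PQ: "\<alpha>\<^sup>2 + \<gamma>\<^sup>2 = P" "\<beta>\<^sup>2 + \<epsilon>\<^sup>2 = Q" and cross: "p1 * q2 - p2 * q1 = \<alpha> * \<epsilon> - \<gamma> * \<beta>"
    using n by simp_all
  have "(\<alpha> * \<epsilon> - \<gamma> * \<beta>)\<^sup>2 \<le> 2 * (\<alpha>\<^sup>2 * \<epsilon>\<^sup>2 + \<gamma>\<^sup>2 * \<beta>\<^sup>2)"
    using zero_le_power2[of "\<alpha> * \<epsilon> + \<gamma> * \<beta>"] by (simp add: power2_eq_square algebra_simps)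
  also have "\<dots> \<le> 2 * (\<alpha>\<^sup>2 * Q + P * \<beta>\<^sup>2)"
  proof -
    have "\<alpha>\<^sup>2 * \<epsilon>\<^sup>2 \<le> \<alpha>\<^sup>2 * Q" "\<gamma>\<^sup>2 * \<beta>\<^sup>2 \<le> P * \<beta>\<^sup>2"
      using PQ by (auto intro: mult_left_mono mult_right_mono)
    then show ?thesis
      by simp
  qed
  finally have "(p1 * q2 - p2 * q1)\<^sup>2 \<le> 2 * (\<alpha>\<^sup>2 * Q + P * \<beta>\<^sup>2)"
    using cross by simp
  then have "4 * r\<^sup>2 * (p1 * q2 - p2 * q1)\<^sup>2 \<le> 4 * r\<^sup>2 * (2 * (\<alpha>\<^sup>2 * Q + P * \<beta>\<^sup>2))"
    by (rule mult_left_mono) simp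
  also have "\<dots> = 2 * ((2 * r * \<alpha>)\<^sup>2 * Q + P * (2 * r * \<beta>)\<^sup>2)"
    by (simp add: power_mult_distrib algebra_simps)
  also have "\<dots> \<le> 2 * (P\<^sup>2 * Q + P * Q\<^sup>2)"
  proof -
    have "(2 * r * \<alpha>)\<^sup>2 \<le> P\<^sup>2" "(2 * r * \<beta>)\<^sup>2 \<le> Q\<^sup>2"
      using p q r unfolding P_def Q_def \<alpha>_def \<beta>_def
      by (simp_all add: power2_le_iff_abs_le abs_mult)
    then show ?thesis
      unfolding P_def Q_def by (simp add: add_mono mult_left_mono mult_right_mono)
  qed
  finally have "4 * r\<^sup>2 * (p1 * q2 - p2 * q1)\<^sup>2 \<le> 2 * (P\<^sup>2 * Q + P * Q\<^sup>2)" .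
  moreover have "8 * (p1 * q2 - p2 * q1)\<^sup>2 \<le> 4 * r\<^sup>2 * (p1 * q2 - p2 * q1)\<^sup>2"
    using r by (intro mult_right_mono) auto
  ultimately show ?thesis
    unfolding P_def [symmetric] Q_def [symmetric] by (simp add: power2_eq_square algebra_simps)
qed

lemma cross_bound_fails_on_boxes:
  fixes p1 p2 q1 q2 :: real
  assumes p1: "1 \<le> p1" "p1 \<le> 1135/1000" and p2: "-214/1000 \<le> p2" "p2 \<le> 311/1000"
    and q1: "0 \<le> q1" "q1 \<le> 2177/10000" and q2: "689/1000 \<le> q2" "q2 \<le> 10293/10000"
  shows "(p1\<^sup>2 + p2\<^sup>2) * (q1\<^sup>2 + q2\<^sup>2) * (p1\<^sup>2 + p2\<^sup>2 + (q1\<^sup>2 + q2\<^sup>2)) < 4 * (p1 * q2 + p2 * q1)\<^sup>2"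
proof -
  define P Q where "P = p1\<^sup>2 + p2\<^sup>2" and "Q = q1\<^sup>2 + q2\<^sup>2"
  \<comment> \<open>The second square is small on these boxes, so the first one is close to \<open>P * Q\<close>.\<close>
  have lagrange: "(p1 * q2 + p2 * q1)\<^sup>2 + (p1 * q1 - p2 * q2)\<^sup>2 = P * Q"
    unfolding P_def Q_def by (simp add: power2_eq_square algebra_simps)
  have "p1 * q1 \<le> p1 * ((32/100) * q2)"
    using p1 q1 q2 by (intro mult_left_mono) auto
  moreover have "(- p2) * q2 \<le> (214/1000) * q2" "p2 * q2 \<le> (311/1000) * q2"
    using p2 q2 by (intro mult_right_mono; simp)+
  moreover have "(214/1000) * q2 \<le> (214/1000) * (p1 * q2)" "(311/1000) * q2 \<le> (534/1000) * (p1 * q2)"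
    using p1 q2 by (simp_all add: mult_right_mono)
  moreover have "0 \<le> p1 * q1"
    using p1 q1 by simp
  ultimately have "\<bar>p1 * q1 - p2 * q2\<bar> \<le> (534/1000) * (p1 * q2)"
    by (intro abs_leI; linarith)
  then have "\<bar>p1 * q1 - p2 * q2\<bar>\<^sup>2 \<le> ((534/1000) * (p1 * q2))\<^sup>2"
    by (rule power_mono) simp
  then have "(p1 * q1 - p2 * q2)\<^sup>2 \<le> ((534/1000) * (p1 * q2))\<^sup>2"
    by simp
  also have "\<dots> = (285156/1000000) * (p1\<^sup>2 * q2\<^sup>2)"
    by (simp add: power_mult_distrib power2_eq_square)
  also have "\<dots> \<le> (285156/1000000) * (P * Q)"
    unfolding P_def Q_def by (intro mult_left_mono mult_mono) auto
  finally have lower: "(2859376/1000000) * (P * Q) \<le> 4 * (p1 * q2 + p2 * q1)\<^sup>2"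
    using lagrange by linarith
  have "p1\<^sup>2 \<le> (1135/1000)\<^sup>2" "p2\<^sup>2 \<le> (311/1000)\<^sup>2" "q1\<^sup>2 \<le> (2177/10000)\<^sup>2" "q2\<^sup>2 \<le> (10293/10000)\<^sup>2"
    using p1 p2 q1 q2 by (simp_all add: power_mono power2_le_iff_abs_le)
  then have "P + Q < 2859376/1000000"
    unfolding P_def Q_def by (simp add: power2_eq_square)
  moreover have "0 < P" "0 < Q"
    using p1 q2 unfolding P_def Q_def by (auto intro: add_pos_nonneg add_nonneg_pos)
  ultimately have "P * Q * (P + Q) < (2859376/1000000) * (P * Q)"
    by (simp add: mult.commute)
  then show ?thesis
    using lower unfolding P_def Q_def by linarith
qed

lemma normalized_configuration_bounds:
  fixes r \<delta> C S y l a b :: real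
  assumes r: "2 < r\<^sup>2" "0 < r" and \<delta>: "0 < \<delta>" and v: "C\<^sup>2 + S\<^sup>2 = 1" "0 \<le> S" "S \<le> C"
    and y: "-1 \<le> y" "y \<le> 1" and l: "-1 \<le> l" "l \<le> 1" and a: "0 \<le> a" "a \<le> 1" and b: "0 \<le> b" "b \<le> 1"
    and nearest: "\<delta>\<^sup>2 \<le> 1 + y\<^sup>2"
    and R_outside: "r\<^sup>2 - (r - \<delta>)\<^sup>2 \<le> 1 + y\<^sup>2 - 2 * (r - \<delta>) * (C + y * S)"
    and f_outside: "r\<^sup>2 - (r - \<delta>)\<^sup>2 \<le> a\<^sup>2 + b\<^sup>2 - 2 * (r - \<delta>) * (a * C + b * S)"
    and L_outside: "r\<^sup>2 - (r + \<delta>)\<^sup>2 \<le> 1 + l\<^sup>2 + 2 * (r + \<delta>) * (l * S - C)"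
  shows "a \<le> 135/1000" and "689/1000 \<le> b" and "786/1000 \<le> l" and "\<delta> \<le> 827/10000" and "S \<le> 3536/10000"
proof -
  define \<rho> \<kappa> where "\<rho> = r - \<delta>" and "\<kappa> = r\<^sup>2 - \<rho>\<^sup>2"
  have "y\<^sup>2 \<le> 1"
    using y by (simp add: abs_square_le_1)
  then have "\<delta>\<^sup>2 < r\<^sup>2"
    using nearest r by linarith
  then have "0 < \<rho>"
    using r \<delta> by (simp add: \<rho>_def power_less_imp_less_base)
  have \<kappa>: "\<kappa> = 2 * r * \<delta> - \<delta>\<^sup>2" "0 < \<kappa>"
    using \<open>0 < \<rho>\<close> \<delta> by (auto simp: \<kappa>_def \<rho>_def power2_eq_square algebra_simps)
  have f_out: "\<kappa> \<le> a\<^sup>2 + b\<^sup>2 - 2 * \<rho> * (a * C + b * S)"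
    and R_out: "\<kappa> \<le> 1 + y\<^sup>2 - 2 * \<rho> * (C + y * S)"
    using f_outside R_outside by (simp_all add: \<kappa>_def \<rho>_def)
  have corner10: "1 \<le> 2 * \<rho> * C" and corner01: "\<kappa> \<le> 1 - 2 * \<rho> * S"
    using outside_ball_pixel_corners[OF a b v _ \<kappa>_def \<kappa>(2) r(1) f_out] \<open>0 < \<rho>\<close> by simp_all
  have corner1m: "\<kappa> \<le> 2 - 2 * \<rho> * (C - S)"
    using outside_ball_edge_corner[OF y _ v(2) R_out] \<open>0 < \<rho>\<close> by simp
  have \<kappa>_small: "\<kappa> \<le> 2255/10000"
    using power_bound[OF v(1,2) _ \<kappa>_def r(1) corner10 corner01 corner1m] \<open>0 < \<rho>\<close> by simp
  then have "8 * S\<^sup>2 \<le> 1" "1 < 4 * (C * S)"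
    using outside_ball_corner01_bound[OF v(2) _ \<kappa>_def \<kappa>(2) _ r(1) corner01]
      outside_ball_corner1m_bound[OF v(1,3) _ \<kappa>_def \<kappa>(2) _ r(1) corner1m] \<open>0 < \<rho>\<close> by simp_all
  then have S: "2588/10000 \<le> S" "S \<le> 3536/10000" and C: "9354/10000 \<le> C"
    using direction_bounds[OF v] by simp_all
  then show "S \<le> 3536/10000"
    by simp
  have \<rho>: "1332/1000 \<le> \<rho>" and \<delta>_small: "\<delta> \<le> 827/10000" and r_large: "14142/10000 \<le> r"
    using radius_bounds[OF r(2) \<open>0 < \<rho>\<close> r(1) \<kappa>_def \<kappa>_small \<rho>_def \<delta>] by simp_all
  then show "\<delta> \<le> 827/10000"
    by simp
  show "689/1000 \<le> b" "a \<le> 135/1000"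
    using pixel_point_bounds[OF a b \<kappa>(2) \<rho> S(1) C f_out] by simp_all
  show "786/1000 \<le> l"
    using opposite_edge_point_bound[OF l v(2) S(2) C r_large \<delta> \<delta>_small \<kappa>(1) \<kappa>_small L_outside] .
qed

lemma normalized_configuration_impossible:
  fixes r \<delta> C S y l a b n1 n2 :: real
  assumes r: "2 < r\<^sup>2" "0 < r" and \<delta>: "0 < \<delta>"
    and v: "C\<^sup>2 + S\<^sup>2 = 1" "0 \<le> S" "S \<le> C" and n: "n1\<^sup>2 + n2\<^sup>2 = 1"
    and y: "-1 \<le> y" "y \<le> 1" and l: "-1 \<le> l" "l \<le> 1"
    and a: "0 \<le> a" "a \<le> 1" and b: "0 \<le> b" "b \<le> 1"
    and nearest: "\<delta>\<^sup>2 \<le> 1 + y\<^sup>2"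
    and R_outside: "r\<^sup>2 - (r - \<delta>)\<^sup>2 \<le> 1 + y\<^sup>2 - 2 * (r - \<delta>) * (C + y * S)"
    and f_outside: "r\<^sup>2 - (r - \<delta>)\<^sup>2 \<le> a\<^sup>2 + b\<^sup>2 - 2 * (r - \<delta>) * (a * C + b * S)"
    and L_outside: "r\<^sup>2 - (r + \<delta>)\<^sup>2 \<le> 1 + l\<^sup>2 + 2 * (r + \<delta>) * (l * S - C)"
    and L_normal: "2 * r * \<bar>(-1 - a) * n1 + (l - b) * n2\<bar> \<le> (-1 - a)\<^sup>2 + (l - b)\<^sup>2"
    and z_normal: "2 * r * \<bar>(-\<delta> * C - a) * n1 + (-\<delta> * S - b) * n2\<bar> \<le> (-\<delta> * C - a)\<^sup>2 + (-\<delta> * S - b)\<^sup>2"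
  shows False
proof -
  note bounds = normalized_configuration_bounds[OF r \<delta> v y l a b nearest R_outside f_outside L_outside]
  have "\<delta> * C \<le> \<delta>"
    using \<delta> first_octant_unit_vector(1)[OF v] by (simp add: mult_left_le)
  moreover have "\<delta> * S \<le> (827/10000) * (3536/10000)"
    using \<delta> bounds(4,5) v(2) by (intro mult_mono) auto
  moreover have "0 \<le> \<delta> * S" "\<delta> * S \<le> \<delta> * C"
    using \<delta> v by (simp_all add: mult_left_mono)
  ultimately have "((1 + a)\<^sup>2 + (l - b)\<^sup>2) * ((\<delta> * C + a)\<^sup>2 + (\<delta> * S + b)\<^sup>2)
      * ((1 + a)\<^sup>2 + (l - b)\<^sup>2 + ((\<delta> * C + a)\<^sup>2 + (\<delta> * S + b)\<^sup>2))
      < 4 * ((1 + a) * (\<delta> * S + b) + (l - b) * (\<delta> * C + a))\<^sup>2"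
    using a b l bounds by (intro cross_bound_fails_on_boxes) auto
  moreover have "4 * ((1 + a) * (\<delta> * S + b) + (l - b) * (\<delta> * C + a))\<^sup>2
      \<le> ((1 + a)\<^sup>2 + (l - b)\<^sup>2) * ((\<delta> * C + a)\<^sup>2 + (\<delta> * S + b)\<^sup>2)
        * ((1 + a)\<^sup>2 + (l - b)\<^sup>2 + ((\<delta> * C + a)\<^sup>2 + (\<delta> * S + b)\<^sup>2))"
    using cross_bound_outside_tangent_balls[OF n r L_normal z_normal]
    by (simp add: power2_eq_square algebra_simps)
  ultimately show False
    by linarith
qed

section \<open>Frame coordinates\<close>

definition frame_coord :: "'a::real_inner \<Rightarrow> real \<Rightarrow> 'a \<Rightarrow> 'a \<Rightarrow> real" where
  "frame_coord c d u p = u \<bullet> (p - c) / d"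

lemma inner_diff_frame_coord:
  "d \<noteq> 0 \<Longrightarrow> u \<bullet> (p - q) = d * (frame_coord c d u p - frame_coord c d u q)"
  by (simp add: frame_coord_def inner_diff_right field_simps)

lemma outside_ball_power_in_frame:
  fixes c v p u1 u2 :: "'a::real_inner"
  assumes frame: "\<And>p q. p \<bullet> q = (u1 \<bullet> p) * (u1 \<bullet> q) + (u2 \<bullet> p) * (u2 \<bullet> q)"
    and "0 < d" and "norm v = 1" and "0 \<le> r" and "r \<le> dist (c + \<rho> *\<^sub>R v) p"
  shows "(r / d)\<^sup>2 - (\<rho> / d)\<^sup>2 \<le> (frame_coord c d u1 p)\<^sup>2 + (frame_coord c d u2 p)\<^sup>2
    - 2 * (\<rho> / d) * (frame_coord c d u1 p * (u1 \<bullet> v) + frame_coord c d u2 p * (u2 \<bullet> v))"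
    (is "_ \<le> ?rhs")
proof -
  have coord: "u \<bullet> (p - c) = d * frame_coord c d u p" for u
    using assms(2) by (simp add: frame_coord_def)
  have "d\<^sup>2 * ((r / d)\<^sup>2 - (\<rho> / d)\<^sup>2) = r\<^sup>2 - \<rho>\<^sup>2"
    using assms(2) by (simp add: power_divide field_simps)
  also have "\<dots> \<le> (norm (p - c))\<^sup>2 - 2 * \<rho> * ((p - c) \<bullet> v)"
    using outside_ball_power[OF assms(3-5)] .
  also have "\<dots> = d\<^sup>2 * ?rhs"
    unfolding power2_norm_eq_inner frame[of "p - c" "p - c"] frame[of "p - c" v] coord[of u1] coord[of u2]
    using assms(2) by (simp add: power2_eq_square field_simps)
  finally show ?thesis
    using assms(2) by simp
qed

lemma normal_at_inner_bound_in_frame: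
  fixes c x n y u1 u2 :: "'a::real_inner"
  assumes frame: "\<And>p q. p \<bullet> q = (u1 \<bullet> p) * (u1 \<bullet> q) + (u2 \<bullet> p) * (u2 \<bullet> q)"
    and "0 < d" and "normal_at r X x n" and "y \<in> frontier X" and "0 \<le> r"
  defines "\<Delta>1 \<equiv> frame_coord c d u1 y - frame_coord c d u1 x"
    and "\<Delta>2 \<equiv> frame_coord c d u2 y - frame_coord c d u2 x"
  shows "2 * (r / d) * \<bar>\<Delta>1 * (u1 \<bullet> n) + \<Delta>2 * (u2 \<bullet> n)\<bar> \<le> \<Delta>1\<^sup>2 + \<Delta>2\<^sup>2"
proof -
  have coord: "u1 \<bullet> (y - x) = d * \<Delta>1" "u2 \<bullet> (y - x) = d * \<Delta>2"
    using assms(2) by (simp_all add: \<Delta>1_def \<Delta>2_def inner_diff_frame_coord)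
  have "(y - x) \<bullet> n = d * (\<Delta>1 * (u1 \<bullet> n) + \<Delta>2 * (u2 \<bullet> n))"
    unfolding frame[of "y - x" n] coord by (simp add: algebra_simps)
  then have "d\<^sup>2 * (2 * (r / d) * \<bar>\<Delta>1 * (u1 \<bullet> n) + \<Delta>2 * (u2 \<bullet> n)\<bar>) = 2 * r * \<bar>(y - x) \<bullet> n\<bar>"
    using assms(2) by (simp add: abs_mult power2_eq_square)
  also have "\<dots> \<le> (norm (y - x))\<^sup>2"
    using normal_at_inner_bound[OF assms(3-5)] .
  also have "\<dots> = d\<^sup>2 * (\<Delta>1\<^sup>2 + \<Delta>2\<^sup>2)"
    unfolding power2_norm_eq_inner frame[of "y - x" "y - x"] coord by (simp add: power2_eq_square algebra_simps)
  finally show ?thesis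
    using assms(2) by (metis mult_le_cancel_left_pos zero_less_power)
qed

lemma frontier_configuration_impossible:
  fixes X :: "'a::real_inner set" and c v n R L f u1 u2 :: "'a"
  assumes frame: "\<And>p q. p \<bullet> q = (u1 \<bullet> p) * (u1 \<bullet> q) + (u2 \<bullet> p) * (u2 \<bullet> q)"
    and r: "2 * d\<^sup>2 < r\<^sup>2" "0 < d" "0 < r" and \<delta>: "0 < \<delta>"
    and z_normal: "normal_at r X (c - \<delta> *\<^sub>R v) v" and v: "0 \<le> u2 \<bullet> v" "u2 \<bullet> v \<le> u1 \<bullet> v"
    and f_normal: "normal_at r X f n"
    and on_frontier: "R \<in> frontier X" "L \<in> frontier X" "f \<in> frontier X" "c - \<delta> *\<^sub>R v \<in> frontier X"
    and nearest: "\<delta> \<le> dist c R"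
    and R: "u1 \<bullet> (R - c) = d" "\<bar>u2 \<bullet> (R - c)\<bar> \<le> d"
    and L: "u1 \<bullet> (L - c) = - d" "\<bar>u2 \<bullet> (L - c)\<bar> \<le> d"
    and f: "0 \<le> u1 \<bullet> (f - c)" "u1 \<bullet> (f - c) \<le> d" "0 \<le> u2 \<bullet> (f - c)" "u2 \<bullet> (f - c) \<le> d"
  shows False
proof -
  have v_unit: "norm v = 1" and n_unit: "norm n = 1"
    using z_normal f_normal by (simp_all add: normal_at_def)
  have balls: "r \<le> dist (c + (r - \<delta>) *\<^sub>R v) p" "r \<le> dist (c + (- (r + \<delta>)) *\<^sub>R v) p"
    if "p \<in> frontier X" for p
    using z_normal that by (auto simp: normal_at_def algebra_simps)
  have coords: "frame_coord c d u1 R = 1" "frame_coord c d u1 L = -1"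
    "frame_coord c d u1 (c - \<delta> *\<^sub>R v) = - (\<delta> / d) * (u1 \<bullet> v)"
    "frame_coord c d u2 (c - \<delta> *\<^sub>R v) = - (\<delta> / d) * (u2 \<bullet> v)"
    using R(1) L(1) r(2) by (simp_all add: frame_coord_def)
  note power = outside_ball_power_in_frame[OF frame r(2) v_unit, where c = c]
  note normal = normal_at_inner_bound_in_frame[OF frame r(2) f_normal _ less_imp_le[OF r(3)], where c = c]
  define y l a b where "y = frame_coord c d u2 R" and "l = frame_coord c d u2 L"
    and "a = frame_coord c d u1 f" and "b = frame_coord c d u2 f"
  define C S where "C = u1 \<bullet> v" and "S = u2 \<bullet> v"
  note defs = y_def l_def a_def b_def C_def S_def
  show False
  proof (rule normalized_configuration_impossible[of "r / d" "\<delta> / d" C S "u1 \<bullet> n" "u2 \<bullet> n" y l a b])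
    show "2 < (r / d)\<^sup>2" "0 < r / d" "0 < \<delta> / d"
      using r \<delta> by (simp_all add: power_divide field_simps)
    show "C\<^sup>2 + S\<^sup>2 = 1" "(u1 \<bullet> n)\<^sup>2 + (u2 \<bullet> n)\<^sup>2 = 1"
      using frame[of v v] frame[of n n] v_unit n_unit
      by (simp_all add: C_def S_def power2_eq_square power2_norm_eq_inner [symmetric])
    show "0 \<le> S" "S \<le> C"
      using v by (simp_all add: C_def S_def)
    show "-1 \<le> y" "y \<le> 1" "-1 \<le> l" "l \<le> 1" "0 \<le> a" "a \<le> 1" "0 \<le> b" "b \<le> 1"
      using R(2) L(2) f r(2) by (simp_all add: defs frame_coord_def abs_le_iff divide_le_eq le_divide_eq)
    show "(\<delta> / d)\<^sup>2 \<le> 1 + y\<^sup>2"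
      using power[of \<delta> 0 R] nearest \<delta> coords by (simp add: defs)
    show "(r / d)\<^sup>2 - (r / d - \<delta> / d)\<^sup>2 \<le> 1 + y\<^sup>2 - 2 * (r / d - \<delta> / d) * (C + y * S)"
      using power[OF _ balls(1)[OF on_frontier(1)]] r coords by (simp add: defs diff_divide_distrib)
    show "(r / d)\<^sup>2 - (r / d - \<delta> / d)\<^sup>2 \<le> a\<^sup>2 + b\<^sup>2 - 2 * (r / d - \<delta> / d) * (a * C + b * S)"
      using power[OF _ balls(1)[OF on_frontier(3)]] r by (simp add: defs diff_divide_distrib)
    show "(r / d)\<^sup>2 - (r / d + \<delta> / d)\<^sup>2 \<le> 1 + l\<^sup>2 + 2 * (r / d + \<delta> / d) * (l * S - C)"
      using power[OF _ balls(2)[OF on_frontier(2)]] r coords by (simp add: defs field_simps power2_eq_square)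
    show "2 * (r / d) * \<bar>(-1 - a) * (u1 \<bullet> n) + (l - b) * (u2 \<bullet> n)\<bar> \<le> (-1 - a)\<^sup>2 + (l - b)\<^sup>2"
      using normal[OF on_frontier(2)] coords by (simp add: defs)
    show "2 * (r / d) * \<bar>(- (\<delta> / d) * C - a) * (u1 \<bullet> n) + (- (\<delta> / d) * S - b) * (u2 \<bullet> n)\<bar>
        \<le> (- (\<delta> / d) * C - a)\<^sup>2 + (- (\<delta> / d) * S - b)\<^sup>2"
      using normal[OF on_frontier(4)] coords by (simp add: defs)
  qed
qed

section \<open>The square and its pixels\<close>

lemma measure_pixel:
  assumes "d > 0" shows "measure lborel (pixel d k l) = d\<^sup>2"
proof -
  have "pixel d k l = cbox (d * of_int k, d * of_int l) (d * of_int (k + 1), d * of_int (l + 1))"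
    unfolding pixel_def by (simp add: cbox_Pair_eq)
  then show ?thesis
    using assms by (simp add: measure_lborel_cbox_eq Basis_prod_def algebra_simps power2_eq_square)
qed

lemma grey_pixel_meets_frontier:
  assumes "d > 0" and "grey_pixel d X k l"
  obtains p where "p \<in> frontier X" and "p \<in> pixel d k l"
proof -
  have "connected (pixel d k l)"
    unfolding pixel_def by (simp add: convex_connected convex_Times)
  moreover have "pixel d k l \<inter> X \<noteq> {}" "pixel d k l - X \<noteq> {}"
    using assms measure_pixel[OF assms(1), of k l]
    by (auto simp: grey_pixel_def area_def Int_absorb1 Int_commute)
  ultimately show ?thesis
    using connected_Int_frontier that by blast
qed

text \<open>Orthogonal pairs of signed axes are the frames realizing the symmetries of the square.\<close>

definition axes :: "(real \<times> real) set" where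
  "axes = {(1, 0), (-1, 0), (0, 1), (0, -1)}"

lemma uminus_axes: "u \<in> axes \<Longrightarrow> - u \<in> axes"
  by (auto simp: axes_def)

lemma inner_axes_frame:
  assumes "u1 \<in> axes" and "u2 \<in> axes" and "u1 \<bullet> u2 = 0"
  shows "p \<bullet> q = (u1 \<bullet> p) * (u1 \<bullet> q) + (u2 \<bullet> p) * (u2 \<bullet> q)"
  using assms by (cases p; cases q) (auto simp: axes_def inner_Pair)

lemma octant_frame:
  fixes v :: "real \<times> real"
  obtains u1 u2 where "u1 \<in> axes" and "u2 \<in> axes" and "u1 \<bullet> u2 = 0"
    and "0 \<le> u2 \<bullet> v" and "u2 \<bullet> v \<le> u1 \<bullet> v"
proof -
  obtain x y where v: "v = (x, y)"
    by fastforce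
  define sx sy :: real where "sx = (if 0 \<le> x then 1 else -1)" and "sy = (if 0 \<le> y then 1 else -1)"
  have "(sx, 0) \<in> axes" "(0, sy) \<in> axes" "(sx, 0) \<bullet> v = \<bar>x\<bar>" "(0, sy) \<bullet> v = \<bar>y\<bar>"
    by (auto simp: axes_def sx_def sy_def v inner_Pair)
  then show ?thesis
    using that[of "(sx, 0)" "(0, sy)"] that[of "(0, sy)" "(sx, 0)"] by (force simp: inner_Pair)
qed

lemma square_edge_point:
  assumes "\<forall>E \<in> square_edges a b (2 * d). frontier X \<inter> E \<noteq> {}" and "u \<in> axes"
  obtains p where "p \<in> frontier X" and "u \<bullet> (p - (a + d, b + d)) = d"
    and "\<forall>w\<in>axes. \<bar>w \<bullet> (p - (a + d, b + d))\<bar> \<le> d"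
proof -
  obtain E where "E \<in> square_edges a b (2 * d)"
    and E: "E = (if u = (1, 0) then {a + 2 * d} \<times> {b..b + 2 * d}
              else if u = (-1, 0) then {a} \<times> {b..b + 2 * d}
              else if u = (0, 1) then {a..a + 2 * d} \<times> {b + 2 * d}
              else {a..a + 2 * d} \<times> {b})"
    by (simp add: square_edges_def)
  then obtain p where "p \<in> frontier X" "p \<in> E"
    using assms(1) by blast
  moreover have "u \<bullet> (p - (a + d, b + d)) = d" "\<forall>w\<in>axes. \<bar>w \<bullet> (p - (a + d, b + d))\<bar> \<le> d"
    using \<open>p \<in> E\<close> assms(2) unfolding E by (auto simp: axes_def inner_Pair abs_le_iff)
  ultimately show ?thesis
    using that by blast
qed

lemma grey_quadrant_point:
  assumes "0 < d" and grey: "grey_pixel d X k l" "grey_pixel d X (k + 1) l"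
    "grey_pixel d X k (l + 1)" "grey_pixel d X (k + 1) (l + 1)"
    and u: "u1 \<in> axes" "u2 \<in> axes" "u1 \<bullet> u2 = 0"
  defines "c \<equiv> (d * of_int k + d, d * of_int l + d)"
  obtains f where "f \<in> frontier X" and "0 \<le> u1 \<bullet> (f - c)" and "u1 \<bullet> (f - c) \<le> d"
    and "0 \<le> u2 \<bullet> (f - c)" and "u2 \<bullet> (f - c) \<le> d"
proof -
  \<comment> \<open>The pixel \<open>(k + i, l + j)\<close> is the one in the quadrant spanned by \<open>u1\<close> and \<open>u2\<close>.\<close>
  define i j :: int where "i = (if 0 < fst (u1 + u2) then 1 else 0)" and "j = (if 0 < snd (u1 + u2) then 1 else 0)"
  have "grey_pixel d X (k + i) (l + j)"
    using grey by (simp add: i_def j_def)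
  then obtain f where "f \<in> frontier X" and f: "f \<in> pixel d (k + i) (l + j)"
    using grey_pixel_meets_frontier assms(1) by blast
  moreover have "0 \<le> u1 \<bullet> (f - c) \<and> u1 \<bullet> (f - c) \<le> d \<and> 0 \<le> u2 \<bullet> (f - c) \<and> u2 \<bullet> (f - c) \<le> d"
    using f u by (cases f) (auto simp: axes_def pixel_def c_def i_def j_def inner_Pair algebra_simps)
  ultimately show ?thesis
    using that by blast
qed

theorem lemma3p14:
  fixes r d :: real and X :: "(real \<times> real) set" and k l :: int
  assumes "r > 0" and "d > 0" and "d * sqrt 2 < r"
    and "bounded X" and "r_regular r X"
    and "\<forall>i j :: int. (d * of_int i, d * of_int j) \<notin> frontier X"
    and "grey_pixel d X k l" and "grey_pixel d X (k + 1) l"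
    and "grey_pixel d X k (l + 1)" and "grey_pixel d X (k + 1) (l + 1)"
  shows "\<not> (\<forall>E \<in> square_edges (d * of_int k) (d * of_int l) (2 * d). frontier X \<inter> E \<noteq> {})"
proof
  assume edges: "\<forall>E \<in> square_edges (d * of_int k) (d * of_int l) (2 * d). frontier X \<inter> E \<noteq> {}"
  define c where "c = (d * of_int k + d, d * of_int l + d)"
  have "c \<notin> frontier X"
    using assms(6)[rule_format, of "k + 1" "l + 1"] by (simp add: c_def algebra_simps)
  moreover have "frontier X \<noteq> {}"
    using edges by (auto simp: square_edges_def)
  ultimately obtain \<delta> v where \<delta>: "0 < \<delta>" "\<forall>y\<in>frontier X. \<delta> \<le> dist c y"
    and z: "c - \<delta> *\<^sub>R v \<in> frontier X" "normal_at r X (c - \<delta> *\<^sub>R v) v"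
    using nearest_frontier_point_normal[OF assms(5,1)] by metis
  obtain u1 u2 where u: "u1 \<in> axes" "u2 \<in> axes" "u1 \<bullet> u2 = 0" and v: "0 \<le> u2 \<bullet> v" "u2 \<bullet> v \<le> u1 \<bullet> v"
    by (rule octant_frame)
  obtain R where R: "R \<in> frontier X" "u1 \<bullet> (R - c) = d" "\<forall>w\<in>axes. \<bar>w \<bullet> (R - c)\<bar> \<le> d"
    by (rule square_edge_point[OF edges u(1), folded c_def])
  obtain L where L: "L \<in> frontier X" "- u1 \<bullet> (L - c) = d" "\<forall>w\<in>axes. \<bar>w \<bullet> (L - c)\<bar> \<le> d"
    by (rule square_edge_point[OF edges uminus_axes[OF u(1)], folded c_def])
  obtain f where f: "f \<in> frontier X" "0 \<le> u1 \<bullet> (f - c)" "u1 \<bullet> (f - c) \<le> d" "0 \<le> u2 \<bullet> (f - c)" "u2 \<bullet> (f - c) \<le> d"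
    by (rule grey_quadrant_point[OF assms(2,7-10) u, folded c_def])
  obtain n where n: "normal_at r X f n"
    using r_regular_normal_at[OF assms(5,1) f(1)] by blast
  have "2 * d\<^sup>2 < r\<^sup>2"
    using power_strict_mono[OF assms(3), of 2] assms(2) by (simp add: power_mult_distrib)
  moreover have "\<delta> \<le> dist c R" "u1 \<bullet> (L - c) = - d" "\<bar>u2 \<bullet> (R - c)\<bar> \<le> d" "\<bar>u2 \<bullet> (L - c)\<bar> \<le> d"
    using \<delta>(2) R L u(2) by auto
  ultimately show False
    using frontier_configuration_impossible[OF inner_axes_frame[OF u] _ assms(2,1) \<delta>(1) z(2) v n
        R(1) L(1) f(1) z(1) _ R(2) _ _ _ f(2-5)] by blast
qed

end
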